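(* Let $H$ and $G$ be as in the construction described in the context. If $H$ is linearly orderable, then so is $G$.
   Context: A group is linearly orderable if it admits a linear order $\le$ such that $g_1\le g_2$ implies $g_1x\le g_2x$ and $xg_1\le xg_2$ for all $x$. Construction: $H$ is a group generated by a countable set $\{a^{(1)},a^{(2)},\ldots\}$. For groups $A,B$, the wreath product $A\,\mathrm{Wr}\,B$ is the semidirect product $A^B\rtimes B$, where $A^B$ is the group of all functions $B\to A$ with pointwise multiplication and $B$ acts by $(bf)(x)=f(xb)$. Let $Z=\langle z\rangle$ be infinite cyclic and let $b^{(i)}\in H^Z$ be given by $b^{(i)}(z^k)=a^{(i)}$ if $k>0$ and $b^{(i)}(z^k)=1$ otherwise. Let $K=\langle z,b^{(i)}\ (i\in\mathbb{N})\rangle\le H\,\mathrm{Wr}\,Z$. Let $\langle s\rangle$ be infinite cyclic and let $c\in K^{\langle s\rangle}$ be given by $c(s)=z$, $c(s^{2^i})=b^{(i)}$ for $i>0$, and $c(s^k)=1$ otherwise. Let $G=\langle c,s\rangle\le K\,\mathrm{Wr}\,\langle s\rangle$. *)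

theory Defs
  imports "HOL-Algebra.Algebra"
begin

definition linearly_orderable :: "('a, 'm) monoid_scheme \<Rightarrow> bool" where
  "linearly_orderable G \<longleftrightarrow> group G \<and>
     (\<exists>le :: 'a \<Rightarrow> 'a \<Rightarrow> bool.
        (\<forall>x\<in>carrier G. le x x) \<and>
        (\<forall>x\<in>carrier G. \<forall>y\<in>carrier G. le x y \<and> le y x \<longrightarrow> x = y) \<and>
        (\<forall>x\<in>carrier G. \<forall>y\<in>carrier G. \<forall>w\<in>carrier G. le x y \<and> le y w \<longrightarrow> le x w) \<and>
        (\<forall>x\<in>carrier G. \<forall>y\<in>carrier G. le x y \<or> le y x) \<and>
        (\<forall>g1\<in>carrier G. \<forall>g2\<in>carrier G. \<forall>x\<in>carrier G.
            le g1 g2 \<longrightarrow> le (g1 \<otimes>\<^bsub>G\<^esub> x) (g2 \<otimes>\<^bsub>G\<^esub> x) \<and> le (x \<otimes>\<^bsub>G\<^esub> g1) (x \<otimes>\<^bsub>G\<^esub> g2)))"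

text \<open>Unrestricted wreath product A Wr Z with Z = <z> infinite cyclic, z^k represented by k :: int.
  Elements (f, k) stand for f z^k with f : Z -> A arbitrary (A^Z, all functions),
  and Z acts by (z^m f)(z^x) = f(z^(x+m)); product (f,m)(g,n) = (f * (z^m g), m+n).\<close>
definition wreath_Z :: "('a, 'm) monoid_scheme \<Rightarrow> ((int \<Rightarrow> 'a) \<times> int) monoid" where
  "wreath_Z A = \<lparr> carrier = {(f, k). \<forall>x. f x \<in> carrier A},
      monoid.mult = (\<lambda>(f, m) (g, n). (\<lambda>x. f x \<otimes>\<^bsub>A\<^esub> g (x + m), m + n)),
      one = (\<lambda>_. \<one>\<^bsub>A\<^esub>, 0) \<rparr>"

definition gen_subgroup :: "('a, 'm) monoid_scheme \<Rightarrow> 'a set \<Rightarrow> ('a, 'm) monoid_scheme" where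
  "gen_subgroup W S = W\<lparr>carrier := generate W S\<rparr>"

definition b_elt :: "('a, 'm) monoid_scheme \<Rightarrow> (nat \<Rightarrow> 'a) \<Rightarrow> nat \<Rightarrow> (int \<Rightarrow> 'a) \<times> int" where
  "b_elt H a i = ((\<lambda>k. if k > 0 then a i else \<one>\<^bsub>H\<^esub>), 0)"

definition z_elt :: "('a, 'm) monoid_scheme \<Rightarrow> (int \<Rightarrow> 'a) \<times> int" where
  "z_elt H = ((\<lambda>_. \<one>\<^bsub>H\<^esub>), 1)"

definition K_grp :: "('a, 'm) monoid_scheme \<Rightarrow> (nat \<Rightarrow> 'a) \<Rightarrow> ((int \<Rightarrow> 'a) \<times> int) monoid" where
  "K_grp H a = gen_subgroup (wreath_Z H) (insert (z_elt H) (b_elt H a ` {i. i \<ge> 1}))"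

definition c_elt :: "('a, 'm) monoid_scheme \<Rightarrow> (nat \<Rightarrow> 'a)
    \<Rightarrow> (int \<Rightarrow> (int \<Rightarrow> 'a) \<times> int) \<times> int" where
  "c_elt H a = ((\<lambda>k. if k = 1 then z_elt H
                     else if (\<exists>i::nat. i \<ge> 1 \<and> k = 2 ^ i) then b_elt H a (SOME i. i \<ge> 1 \<and> k = 2 ^ i)
                     else \<one>\<^bsub>K_grp H a\<^esub>), 0)"

definition s_elt :: "('a, 'm) monoid_scheme \<Rightarrow> (nat \<Rightarrow> 'a)
    \<Rightarrow> (int \<Rightarrow> (int \<Rightarrow> 'a) \<times> int) \<times> int" where
  "s_elt H a = ((\<lambda>_. \<one>\<^bsub>K_grp H a\<^esub>), 1)"

definition G_grp :: "('a, 'm) monoid_scheme \<Rightarrow> (nat \<Rightarrow> 'a)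
    \<Rightarrow> ((int \<Rightarrow> (int \<Rightarrow> 'a) \<times> int) \<times> int) monoid" where
  "G_grp H a = gen_subgroup (wreath_Z (K_grp H a)) {c_elt H a, s_elt H a}"

end

theory Submission
  imports Defs
begin

text \<open>In \<open>A Wr Z\<close>, the elements \<open>f z\<^sup>k\<close> whose \<open>f\<close> is trivial at all sufficiently negative
  positions form a subgroup, and any two distinct such \<open>f\<close> have a leftmost position where they
  differ. If \<open>A\<close> is bi-ordered, ordering this subgroup first by \<open>k\<close> and then by comparing \<open>f\<close> at
  that leftmost difference is a bi-order: right multiplication by \<open>h z\<^sup>n\<close> multiplies both
  functions pointwise by the same shift of \<open>h\<close>, left multiplication shifts both and multiplies
  them pointwise on the left, and neither moves the first difference or reverses its comparison.
  The generators of \<open>K\<close>, and those of \<open>G\<close> (note that \<open>c\<close> is supported on \<open>{1, 2, 4, \<dots>}\<close>), lie in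
  such subgroups, so \<open>K\<close> and then \<open>G\<close> are bi-ordered.\<close>

lemma wreath_Z_carrier [simp]: "(f, k) \<in> carrier (wreath_Z A) \<longleftrightarrow> (\<forall>x. f x \<in> carrier A)"
  by (simp add: wreath_Z_def)

lemma wreath_Z_mult [simp]:
  "(f, m) \<otimes>\<^bsub>wreath_Z A\<^esub> (g, n) = (\<lambda>x. f x \<otimes>\<^bsub>A\<^esub> g (x + m), m + n)"
  by (simp add: wreath_Z_def)

lemma wreath_Z_one [simp]: "\<one>\<^bsub>wreath_Z A\<^esub> = (\<lambda>_. \<one>\<^bsub>A\<^esub>, 0)"
  by (simp add: wreath_Z_def)

lemma wreath_Z_group:
  assumes "group A"
  shows "group (wreath_Z A)"
proof -
  interpret A: group A by fact
  show ?thesis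
  proof (rule groupI)
    fix p assume "p \<in> carrier (wreath_Z A)"
    then obtain f m where p: "p = (f, m)" and f: "\<forall>x. f x \<in> carrier A"
      by (cases p) auto
    show "\<exists>q\<in>carrier (wreath_Z A). q \<otimes>\<^bsub>wreath_Z A\<^esub> p = \<one>\<^bsub>wreath_Z A\<^esub>"
      by (rule bexI[of _ "(\<lambda>x. inv\<^bsub>A\<^esub> f (x - m), - m)"]) (use f in \<open>auto simp: p\<close>)
  next
    fix p q r assume "p \<in> carrier (wreath_Z A)" "q \<in> carrier (wreath_Z A)" "r \<in> carrier (wreath_Z A)"
    then show "p \<otimes>\<^bsub>wreath_Z A\<^esub> q \<otimes>\<^bsub>wreath_Z A\<^esub> r = p \<otimes>\<^bsub>wreath_Z A\<^esub> (q \<otimes>\<^bsub>wreath_Z A\<^esub> r)"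
      by (cases p, cases q, cases r) (auto simp: A.m_assoc add.assoc)
  next
    fix p q assume "p \<in> carrier (wreath_Z A)" "q \<in> carrier (wreath_Z A)"
    then show "p \<otimes>\<^bsub>wreath_Z A\<^esub> q \<in> carrier (wreath_Z A)"
      by (cases p, cases q) auto
  next
    fix p assume "p \<in> carrier (wreath_Z A)"
    then show "\<one>\<^bsub>wreath_Z A\<^esub> \<otimes>\<^bsub>wreath_Z A\<^esub> p = p"
      by (cases p) auto
  qed simp
qed

lemma wreath_Z_inv:
  assumes "group A" and "\<forall>x. f x \<in> carrier A"
  shows "inv\<^bsub>wreath_Z A\<^esub> (f, m) = (\<lambda>x. inv\<^bsub>A\<^esub> f (x - m), - m)"
proof -
  interpret A: group A by fact
  interpret W: group "wreath_Z A" using wreath_Z_group[OF assms(1)] .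
  show ?thesis by (rule W.inv_equality) (use assms(2) in auto)
qed

definition wreath_Z_bdd_below :: "('a, 'm) monoid_scheme \<Rightarrow> ((int \<Rightarrow> 'a) \<times> int) set" where
  "wreath_Z_bdd_below A = {(f, k). (\<forall>x. f x \<in> carrier A) \<and> (\<exists>N. \<forall>x<N. f x = \<one>\<^bsub>A\<^esub>)}"

lemma subgroup_wreath_Z_bdd_below:
  assumes "group A"
  shows "subgroup (wreath_Z_bdd_below A) (wreath_Z A)"
proof -
  interpret A: group A by fact
  interpret W: group "wreath_Z A" using wreath_Z_group[OF assms] .
  show ?thesis
  proof (rule W.subgroupI)
    show "wreath_Z_bdd_below A \<subseteq> carrier (wreath_Z A)"
      by (auto simp: wreath_Z_bdd_below_def)
    show "wreath_Z_bdd_below A \<noteq> {}"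
      by (auto simp: wreath_Z_bdd_below_def intro!: exI[of _ "(\<lambda>_. \<one>\<^bsub>A\<^esub>, 0)"])
  next
    fix p assume "p \<in> wreath_Z_bdd_below A"
    then obtain f m N where p: "p = (f, m)" and f: "\<forall>x. f x \<in> carrier A"
      and N: "\<forall>x<N. f x = \<one>\<^bsub>A\<^esub>"
      by (auto simp: wreath_Z_bdd_below_def)
    have "\<forall>x<N + m. inv\<^bsub>A\<^esub> f (x - m) = \<one>\<^bsub>A\<^esub>" using N by auto
    then show "inv\<^bsub>wreath_Z A\<^esub> p \<in> wreath_Z_bdd_below A"
      using f by (auto simp: p wreath_Z_inv[OF assms f] wreath_Z_bdd_below_def)
  next
    fix p q assume "p \<in> wreath_Z_bdd_below A" "q \<in> wreath_Z_bdd_below A"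
    then obtain f m N g n M where p: "p = (f, m)" and f: "\<forall>x. f x \<in> carrier A"
      and N: "\<forall>x<N. f x = \<one>\<^bsub>A\<^esub>" and q: "q = (g, n)" and g: "\<forall>x. g x \<in> carrier A"
      and M: "\<forall>x<M. g x = \<one>\<^bsub>A\<^esub>"
      by (auto simp: wreath_Z_bdd_below_def)
    have "\<forall>x<min N (M - m). f x \<otimes>\<^bsub>A\<^esub> g (x + m) = \<one>\<^bsub>A\<^esub>" using N M g by auto
    then have "\<exists>K. \<forall>x<K. f x \<otimes>\<^bsub>A\<^esub> g (x + m) = \<one>\<^bsub>A\<^esub>" by blast
    then show "p \<otimes>\<^bsub>wreath_Z A\<^esub> q \<in> wreath_Z_bdd_below A"
      using f g by (auto simp: p q wreath_Z_bdd_below_def)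
  qed
qed

definition first_diff :: "(int \<Rightarrow> 'a) \<Rightarrow> (int \<Rightarrow> 'a) \<Rightarrow> int \<Rightarrow> bool" where
  "first_diff f g x \<longleftrightarrow> f x \<noteq> g x \<and> (\<forall>y<x. f y = g y)"

lemma first_diff_commute: "first_diff f g x \<longleftrightarrow> first_diff g f x"
  unfolding first_diff_def by (metis (no_types))

lemma first_diff_unique:
  assumes "first_diff f g x" and "first_diff f g y"
  shows "x = y"
  using assms unfolding first_diff_def by (cases x y rule: linorder_cases) auto

lemma first_diff_exists:
  assumes agree: "\<forall>x<N. f x = g x" and "f \<noteq> g"
  shows "\<exists>x. first_diff f g x"
proof -
  let ?P = "\<lambda>n::nat. f (N + int n) \<noteq> g (N + int n)"
  obtain x0 where "f x0 \<noteq> g x0" using assms(2) by blast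
  moreover have "N \<le> x0" using agree calculation by (meson not_le)
  ultimately have "?P (nat (x0 - N))" by simp
  then have least: "?P (LEAST n. ?P n)" by (rule LeastI)
  have "f y = g y" if "y < N + int (LEAST n. ?P n)" for y
  proof (cases "y < N")
    case False
    then have "nat (y - N) < (LEAST n. ?P n)" using that by linarith
    then have "\<not> ?P (nat (y - N))" by (rule not_less_Least)
    then show ?thesis using False by simp
  qed (use agree in blast)
  with least show ?thesis unfolding first_diff_def by blast
qed

lemma first_diff_shift:
  "first_diff (\<lambda>x. f (x + k)) (\<lambda>x. g (x + k)) x \<longleftrightarrow> first_diff f g (x + k)"
proof -
  have "(\<forall>y<x. f (y + k) = g (y + k)) \<longleftrightarrow> (\<forall>y<x + k. f y = g y)"
  proof
    assume shifted: "\<forall>y<x. f (y + k) = g (y + k)"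
    show "\<forall>y<x + k. f y = g y"
      using shifted[rule_format, of "_ - k"] by simp
  qed simp
  then show ?thesis by (simp add: first_diff_def)
qed

lemma first_diff_pointwise:
  assumes "\<And>x. inj_on (\<phi> x) S" and "\<forall>x. f x \<in> S" and "\<forall>x. g x \<in> S"
  shows "first_diff (\<lambda>x. \<phi> x (f x)) (\<lambda>x. \<phi> x (g x)) x \<longleftrightarrow> first_diff f g x"
proof -
  have "\<phi> y (f y) = \<phi> y (g y) \<longleftrightarrow> f y = g y" for y
    using assms(2,3) by (simp add: inj_on_eq_iff[OF assms(1)])
  then show ?thesis by (simp add: first_diff_def)
qed

definition lex_fun :: "('a \<Rightarrow> 'a \<Rightarrow> bool) \<Rightarrow> (int \<Rightarrow> 'a) \<Rightarrow> (int \<Rightarrow> 'a) \<Rightarrow> bool" where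
  "lex_fun R f g \<longleftrightarrow> f = g \<or> (\<exists>x. first_diff f g x \<and> R (f x) (g x))"

lemma lex_fun_shift:
  assumes "lex_fun R f g"
  shows "lex_fun R (\<lambda>x. f (x + k)) (\<lambda>x. g (x + k))"
proof (cases "f = g")
  case False
  then obtain x where x: "first_diff f g x" "R (f x) (g x)"
    using assms unfolding lex_fun_def by blast
  then have "first_diff (\<lambda>y. f (y + k)) (\<lambda>y. g (y + k)) (x - k)"
    by (simp add: first_diff_shift)
  moreover have "R (f (x - k + k)) (g (x - k + k))" using x(2) by simp
  ultimately show ?thesis unfolding lex_fun_def by blast
qed (simp add: lex_fun_def)

lemma lex_fun_pointwise:
  assumes "\<And>x. inj_on (\<phi> x) S"
    and "\<And>x u v. u \<in> S \<Longrightarrow> v \<in> S \<Longrightarrow> R u v \<Longrightarrow> R (\<phi> x u) (\<phi> x v)"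
    and "\<forall>x. f x \<in> S" and "\<forall>x. g x \<in> S" and "lex_fun R f g"
  shows "lex_fun R (\<lambda>x. \<phi> x (f x)) (\<lambda>x. \<phi> x (g x))"
proof (cases "f = g")
  case False
  then obtain x where x: "first_diff f g x" "R (f x) (g x)"
    using assms(5) unfolding lex_fun_def by blast
  then have "first_diff (\<lambda>y. \<phi> y (f y)) (\<lambda>y. \<phi> y (g y)) x"
    by (simp add: first_diff_pointwise[OF assms(1,3,4)])
  moreover have "R (\<phi> x (f x)) (\<phi> x (g x))" using assms(2,3,4) x(2) by blast
  ultimately show ?thesis unfolding lex_fun_def by blast
qed (simp add: lex_fun_def)

locale linorder_on =
  fixes S :: "'a set" and R :: "'a \<Rightarrow> 'a \<Rightarrow> bool"
  assumes ord_refl: "u \<in> S \<Longrightarrow> R u u"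
    and ord_antisym: "u \<in> S \<Longrightarrow> v \<in> S \<Longrightarrow> R u v \<Longrightarrow> R v u \<Longrightarrow> u = v"
    and ord_trans: "u \<in> S \<Longrightarrow> v \<in> S \<Longrightarrow> w \<in> S \<Longrightarrow> R u v \<Longrightarrow> R v w \<Longrightarrow> R u w"
    and ord_total: "u \<in> S \<Longrightarrow> v \<in> S \<Longrightarrow> R u v \<or> R v u"
begin

lemma lex_fun_antisym:
  assumes "\<forall>x. f x \<in> S" and "\<forall>x. g x \<in> S" and "lex_fun R f g" and "lex_fun R g f"
  shows "f = g"
proof (rule ccontr)
  assume "f \<noteq> g"
  then obtain x y where x: "first_diff f g x" "R (f x) (g x)" and y: "first_diff g f y" "R (g y) (f y)"
    using assms(3,4) unfolding lex_fun_def by auto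
  have "x = y" using first_diff_unique x(1) y(1) first_diff_commute by blast
  then have "f x = g x" using ord_antisym assms(1,2) x(2) y(2) by blast
  then show False using x(1) by (simp add: first_diff_def)
qed

lemma lex_fun_trans:
  assumes vals: "\<forall>x. f x \<in> S" "\<forall>x. g x \<in> S" "\<forall>x. h x \<in> S"
    and "lex_fun R f g" and "lex_fun R g h"
  shows "lex_fun R f h"
proof (cases "f = g \<or> g = h")
  case True
  then show ?thesis using assms by auto
next
  case False
  then obtain x y where x: "first_diff f g x" "R (f x) (g x)" and y: "first_diff g h y" "R (g y) (h y)"
    using assms(4,5) unfolding lex_fun_def by auto
  consider "x < y" | "y < x" | "x = y" by linarith
  then show ?thesis
  proof cases
    case 1
    then have "first_diff f h x" "g x = h x" using x y by (auto simp: first_diff_def)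
    then show ?thesis using x(2) unfolding lex_fun_def by auto
  next
    case 2
    then have "first_diff f h y" "f y = g y" using x y by (auto simp: first_diff_def)
    then show ?thesis using y(2) unfolding lex_fun_def by auto
  next
    case 3
    have "R (f x) (h x)" using ord_trans[of "f x" "g x" "h x"] x y 3 vals by simp
    moreover have "f x \<noteq> h x"
    proof
      assume "f x = h x"
      then have "f x = g x" using ord_antisym[of "f x" "g x"] x y 3 vals by simp
      then show False using x(1) by (simp add: first_diff_def)
    qed
    ultimately show ?thesis using x y 3 unfolding lex_fun_def first_diff_def by auto
  qed
qed

lemma lex_fun_total:
  assumes "\<forall>x. f x \<in> S" and "\<forall>x. g x \<in> S" and "\<forall>x<N. f x = g x"
  shows "lex_fun R f g \<or> lex_fun R g f"
proof (cases "f = g")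
  case False
  then obtain x where "first_diff f g x" using first_diff_exists[OF assms(3)] by blast
  then have "first_diff g f x" by (simp add: first_diff_commute)
  then show ?thesis
    using \<open>first_diff f g x\<close> ord_total[of "f x" "g x"] assms(1,2) unfolding lex_fun_def by blast
qed (simp add: lex_fun_def)

end

definition wreath_lex :: "('a \<Rightarrow> 'a \<Rightarrow> bool) \<Rightarrow> (int \<Rightarrow> 'a) \<times> int \<Rightarrow> (int \<Rightarrow> 'a) \<times> int \<Rightarrow> bool" where
  "wreath_lex R p q \<longleftrightarrow> snd p < snd q \<or> (snd p = snd q \<and> lex_fun R (fst p) (fst q))"

lemma linorder_on_wreath_lex:
  assumes "linorder_on (carrier A) R"
  shows "linorder_on (wreath_Z_bdd_below A) (wreath_lex R)"
proof -
  interpret linorder_on "carrier A" R by fact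
  show ?thesis
  proof
    fix p q r
    assume p: "p \<in> wreath_Z_bdd_below A" and q: "q \<in> wreath_Z_bdd_below A"
      and r: "r \<in> wreath_Z_bdd_below A"
    obtain f m N where pp: "p = (f, m)" and f: "\<forall>x. f x \<in> carrier A"
      and N: "\<forall>x<N. f x = \<one>\<^bsub>A\<^esub>"
      using p by (auto simp: wreath_Z_bdd_below_def)
    obtain g n M where qq: "q = (g, n)" and g: "\<forall>x. g x \<in> carrier A"
      and M: "\<forall>x<M. g x = \<one>\<^bsub>A\<^esub>"
      using q by (auto simp: wreath_Z_bdd_below_def)
    obtain h k where rr: "r = (h, k)" and h: "\<forall>x. h x \<in> carrier A"
      using r by (auto simp: wreath_Z_bdd_below_def)
    show "wreath_lex R p p" by (simp add: wreath_lex_def lex_fun_def)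
    show "wreath_lex R p q \<Longrightarrow> wreath_lex R q p \<Longrightarrow> p = q"
      using lex_fun_antisym[OF f g] by (auto simp: wreath_lex_def pp qq)
    show "wreath_lex R p q \<Longrightarrow> wreath_lex R q r \<Longrightarrow> wreath_lex R p r"
      using lex_fun_trans[OF f g h] by (auto simp: wreath_lex_def pp qq rr)
    have "\<forall>x<min N M. f x = g x" using N M by simp
    then have "lex_fun R f g \<or> lex_fun R g f" by (rule lex_fun_total[OF f g])
    then show "wreath_lex R p q \<or> wreath_lex R q p"
      by (auto simp: wreath_lex_def pp qq)
  qed
qed

locale bi_ordered_group = group G + linorder_on "carrier G" R
  for G :: "('a, 'b) monoid_scheme" (structure) and R +
  assumes ord_mult_right: "x \<in> carrier G \<Longrightarrow> y \<in> carrier G \<Longrightarrow> z \<in> carrier G \<Longrightarrow>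
      R x y \<Longrightarrow> R (x \<otimes> z) (y \<otimes> z)"
    and ord_mult_left: "x \<in> carrier G \<Longrightarrow> y \<in> carrier G \<Longrightarrow> z \<in> carrier G \<Longrightarrow>
      R x y \<Longrightarrow> R (z \<otimes> x) (z \<otimes> y)"

lemma linearly_orderable_iff_bi_ordered_group:
  "linearly_orderable G \<longleftrightarrow> (\<exists>R. bi_ordered_group G R)"
proof
  assume "linearly_orderable G"
  then obtain R where "group G"
    and R: "\<forall>x\<in>carrier G. R x x" "\<forall>x\<in>carrier G. \<forall>y\<in>carrier G. R x y \<and> R y x \<longrightarrow> x = y"
      "\<forall>x\<in>carrier G. \<forall>y\<in>carrier G. \<forall>w\<in>carrier G. R x y \<and> R y w \<longrightarrow> R x w"
      "\<forall>x\<in>carrier G. \<forall>y\<in>carrier G. R x y \<or> R y x"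
      "\<forall>g1\<in>carrier G. \<forall>g2\<in>carrier G. \<forall>x\<in>carrier G.
         R g1 g2 \<longrightarrow> R (g1 \<otimes>\<^bsub>G\<^esub> x) (g2 \<otimes>\<^bsub>G\<^esub> x) \<and> R (x \<otimes>\<^bsub>G\<^esub> g1) (x \<otimes>\<^bsub>G\<^esub> g2)"
    unfolding linearly_orderable_def by blast
  have "linorder_on (carrier G) R"
    by unfold_locales (use R(1-4) in blast)+
  with \<open>group G\<close> have "bi_ordered_group G R"
    by (intro bi_ordered_group.intro bi_ordered_group_axioms.intro) (use R(5) in blast)+
  then show "\<exists>R. bi_ordered_group G R" by blast
next
  assume "\<exists>R. bi_ordered_group G R"
  then obtain R where "bi_ordered_group G R" ..
  then interpret bi_ordered_group G R .
  show "linearly_orderable G"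
    unfolding linearly_orderable_def
    by (intro conjI is_group exI[of _ R] ballI impI)
      (use ord_total in \<open>auto intro: ord_refl ord_antisym ord_trans ord_mult_right ord_mult_left\<close>)
qed

lemma bi_ordered_group_subgroup:
  assumes "bi_ordered_group G R" and "subgroup H G"
  shows "bi_ordered_group (G\<lparr>carrier := H\<rparr>) R"
proof -
  interpret bi_ordered_group G R by fact
  have "group (G\<lparr>carrier := H\<rparr>)" by (rule subgroup.subgroup_is_group[OF assms(2) is_group])
  moreover have "H \<subseteq> carrier G" by (rule subgroup.subset[OF assms(2)])
  ultimately show ?thesis
    unfolding bi_ordered_group_def bi_ordered_group_axioms_def linorder_on_def
    by (auto intro: ord_refl ord_antisym ord_trans ord_mult_right ord_mult_left)
      (meson ord_total subsetD)
qed

context bi_ordered_group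
begin

lemma wreath_lex_mult_right:
  assumes "p \<in> carrier (wreath_Z G)" and "q \<in> carrier (wreath_Z G)" and "r \<in> carrier (wreath_Z G)"
    and "wreath_lex R p q"
  shows "wreath_lex R (p \<otimes>\<^bsub>wreath_Z G\<^esub> r) (q \<otimes>\<^bsub>wreath_Z G\<^esub> r)"
proof -
  obtain f m g n h k where pp: "p = (f, m)" and qq: "q = (g, n)" and rr: "r = (h, k)"
    by (cases p, cases q, cases r)
  have f: "\<forall>x. f x \<in> carrier G" and g: "\<forall>x. g x \<in> carrier G" and h: "\<And>x. h x \<in> carrier G"
    using assms(1-3) by (auto simp: pp qq rr)
  show ?thesis
  proof (cases "m < n")
    case False
    then have "m = n" and fg: "lex_fun R f g" using assms(4) by (auto simp: wreath_lex_def pp qq)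
    moreover have "lex_fun R (\<lambda>x. f x \<otimes> h (x + m)) (\<lambda>x. g x \<otimes> h (x + m))"
    proof (rule lex_fun_pointwise[where \<phi> = "\<lambda>x u. u \<otimes> h (x + m)" and S = "carrier G"])
      show "inj_on (\<lambda>u. u \<otimes> h (x + m)) (carrier G)" for x by (rule inj_on_multc[OF h])
      show "R (u \<otimes> h (x + m)) (v \<otimes> h (x + m))"
        if "u \<in> carrier G" "v \<in> carrier G" "R u v" for x u v
        using that h by (simp add: ord_mult_right)
    qed (use f g fg in auto)
    ultimately show ?thesis by (simp add: wreath_lex_def pp qq rr)
  qed (simp add: wreath_lex_def pp qq rr)
qed

lemma wreath_lex_mult_left:
  assumes "p \<in> carrier (wreath_Z G)" and "q \<in> carrier (wreath_Z G)" and "r \<in> carrier (wreath_Z G)"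
    and "wreath_lex R p q"
  shows "wreath_lex R (r \<otimes>\<^bsub>wreath_Z G\<^esub> p) (r \<otimes>\<^bsub>wreath_Z G\<^esub> q)"
proof -
  obtain f m g n h k where pp: "p = (f, m)" and qq: "q = (g, n)" and rr: "r = (h, k)"
    by (cases p, cases q, cases r)
  have f: "\<forall>x. f x \<in> carrier G" and g: "\<forall>x. g x \<in> carrier G" and h: "\<And>x. h x \<in> carrier G"
    using assms(1-3) by (auto simp: pp qq rr)
  show ?thesis
  proof (cases "m < n")
    case False
    then have "m = n" and fg: "lex_fun R f g" using assms(4) by (auto simp: wreath_lex_def pp qq)
    moreover have "lex_fun R (\<lambda>x. h x \<otimes> f (x + k)) (\<lambda>x. h x \<otimes> g (x + k))"
    proof (rule lex_fun_pointwise[where \<phi> = "\<lambda>x u. h x \<otimes> u" and S = "carrier G"])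
      show "inj_on (\<lambda>u. h x \<otimes> u) (carrier G)" for x by (rule inj_on_cmult[OF h])
      show "R (h x \<otimes> u) (h x \<otimes> v)" if "u \<in> carrier G" "v \<in> carrier G" "R u v" for x u v
        using that h by (simp add: ord_mult_left)
      show "lex_fun R (\<lambda>x. f (x + k)) (\<lambda>x. g (x + k))" by (rule lex_fun_shift[OF fg])
    qed (use f g in auto)
    ultimately show ?thesis by (simp add: wreath_lex_def pp qq rr)
  qed (simp add: wreath_lex_def pp qq rr)
qed

lemma bi_ordered_group_wreath_Z_bdd_below:
  "bi_ordered_group ((wreath_Z G)\<lparr>carrier := wreath_Z_bdd_below G\<rparr>) (wreath_lex R)"
proof -
  have sub: "subgroup (wreath_Z_bdd_below G) (wreath_Z G)"
    by (rule subgroup_wreath_Z_bdd_below[OF is_group])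
  then have car: "\<And>p. p \<in> wreath_Z_bdd_below G \<Longrightarrow> p \<in> carrier (wreath_Z G)"
    using subgroup.subset by blast
  show ?thesis
  proof (intro bi_ordered_group.intro bi_ordered_group_axioms.intro)
    show "group ((wreath_Z G)\<lparr>carrier := wreath_Z_bdd_below G\<rparr>)"
      by (rule subgroup.subgroup_is_group[OF sub wreath_Z_group[OF is_group]])
    show "linorder_on (carrier ((wreath_Z G)\<lparr>carrier := wreath_Z_bdd_below G\<rparr>)) (wreath_lex R)"
      using linorder_on_wreath_lex[of G R] by (simp add: linorder_on_axioms)
  qed (simp_all add: car wreath_lex_mult_right wreath_lex_mult_left)
qed

end

lemma linearly_orderable_gen_subgroup_wreath_Z:
  assumes "linearly_orderable A" and "S \<subseteq> wreath_Z_bdd_below A"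
  shows "linearly_orderable (gen_subgroup (wreath_Z A) S)"
proof -
  obtain R where "bi_ordered_group A R"
    using assms(1) linearly_orderable_iff_bi_ordered_group by blast
  then interpret bi_ordered_group A R .
  interpret W: group "wreath_Z A" by (rule wreath_Z_group[OF is_group])
  have sub: "subgroup (wreath_Z_bdd_below A) (wreath_Z A)"
    by (rule subgroup_wreath_Z_bdd_below[OF is_group])
  have S: "S \<subseteq> carrier (wreath_Z A)" using assms(2) subgroup.subset[OF sub] by blast
  have "subgroup (generate (wreath_Z A) S) ((wreath_Z A)\<lparr>carrier := wreath_Z_bdd_below A\<rparr>)"
    by (rule W.subgroup_incl[OF W.generate_is_subgroup[OF S] sub
          W.generate_subgroup_incl[OF assms(2) sub]])
  then have "bi_ordered_group (gen_subgroup (wreath_Z A) S) (wreath_lex R)"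
    using bi_ordered_group_subgroup[OF bi_ordered_group_wreath_Z_bdd_below]
    by (simp add: gen_subgroup_def)
  then show ?thesis using linearly_orderable_iff_bi_ordered_group by blast
qed

lemma K_grp_generators_bdd_below:
  assumes "group H" and "\<And>i. i \<ge> 1 \<Longrightarrow> a i \<in> carrier H"
  shows "insert (z_elt H) (b_elt H a ` {i. i \<ge> 1}) \<subseteq> wreath_Z_bdd_below H"
proof -
  interpret group H by fact
  have "z_elt H \<in> wreath_Z_bdd_below H" by (auto simp: z_elt_def wreath_Z_bdd_below_def)
  moreover have "b_elt H a i \<in> wreath_Z_bdd_below H" if "i \<ge> 1" for i
    using assms(2)[OF that] by (auto simp: b_elt_def wreath_Z_bdd_below_def intro!: exI[of _ 1])
  ultimately show ?thesis by blast
qed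

lemma G_grp_generators_bdd_below: "{c_elt H a, s_elt H a} \<subseteq> wreath_Z_bdd_below (K_grp H a)"
proof -
  let ?K = "K_grp H a"
  have gen: "x \<in> carrier ?K" if "x \<in> insert (z_elt H) (b_elt H a ` {i. i \<ge> 1})" for x
    using that by (simp add: K_grp_def gen_subgroup_def generate.incl)
  have one: "\<one>\<^bsub>?K\<^esub> \<in> carrier ?K"
    using generate.one[of "wreath_Z H"] by (simp add: K_grp_def gen_subgroup_def)
  have c_vals: "fst (c_elt H a) k \<in> carrier ?K" for k
  proof -
    have "b_elt H a (SOME i. i \<ge> 1 \<and> k = 2 ^ i) \<in> b_elt H a ` {i. i \<ge> 1}"
      if "\<exists>i::nat. i \<ge> 1 \<and> k = 2 ^ i"
      using someI_ex[OF that] by blast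
    then show ?thesis using gen one by (auto simp: c_elt_def)
  qed
  have c_low: "fst (c_elt H a) k = \<one>\<^bsub>?K\<^esub>" if "k < 1" for k
  proof -
    have "\<not> (2::int) ^ i < 1" for i :: nat by (simp add: not_less one_le_power)
    then show ?thesis using that by (auto simp: c_elt_def)
  qed
  show ?thesis
    using c_vals c_low one
    by (auto simp: wreath_Z_bdd_below_def s_elt_def intro!: exI[of _ 1])
qed

theorem corollary4:
  fixes H :: "('a, 'm) monoid_scheme" and a :: "nat \<Rightarrow> 'a"
  assumes "group H"
    and "\<And>i. i \<ge> 1 \<Longrightarrow> a i \<in> carrier H"
    and "generate H (a ` {i. i \<ge> 1}) = carrier H"
    and "linearly_orderable H"
  shows "linearly_orderable (G_grp H a)"
proof -
  have "linearly_orderable (K_grp H a)"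
    unfolding K_grp_def
    using assms(4) K_grp_generators_bdd_below[OF assms(1,2)]
    by (rule linearly_orderable_gen_subgroup_wreath_Z)
  then show ?thesis
    unfolding G_grp_def using G_grp_generators_bdd_below
    by (rule linearly_orderable_gen_subgroup_wreath_Z)
qed

end
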